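(* Let $q\ge1$ and $t\ge 1$ be integers. If a code $\mathcal{C}\subseteq\mathcal{S}_{\mathrm{all}}^q$ is a $t$-tail-deletion-correcting code, then it is a $t$-tail-insertion-correcting code. However, the converse does not hold in general: there exist integers $q$ and $t\ge1$ and a code $\mathcal{C}\subseteq\mathcal{S}_{\mathrm{all}}^q$ that is $t$-tail-insertion-correcting but not $t$-tail-deletion-correcting.
   Context: Let $[q]=\{0,1,\dots,q-1\}$. For $1\le m\le q$, a partial permutation of length $m$ over $[q]$ is a sequence $\pi=(\pi_1,\dots,\pi_m)$ of $m$ pairwise distinct elements of $[q]$. Let $\mathcal{S}_m^q$ be the set of those of length $m$ and $\mathcal{S}_{\mathrm{all}}^q=\bigcup_{m=1}^{q}\mathcal{S}_m^q$. A code is any subset of $\mathcal{S}_{\mathrm{all}}^q$. Juxtaposition $\omega\pi$ denotes concatenation with $\omega$ on the left. Tail deletions: for $\pi$ of length $m$ and integer $j\ge 0$, $\pi_{\downarrow j}=(\pi_{k+1},\dots,\pi_m)$ with $k=\min(j,m-1)$ (leftmost symbols are deleted; the last symbol is never deleted); $\mathcal{B}_{\mathrm{del}}^t(\pi)=\{\pi_{\downarrow j}:0\le j\le t\}$. Tail insertions: $\mathcal{B}_{\mathrm{ins}}^t(\pi)$ is the set of all $\omega\pi\in\mathcal{S}_{\mathrm{all}}^q$ with $\omega$ a (possibly empty) sequence of at most $t$ elements of $[q]$. For $X\in\{\mathrm{del},\mathrm{ins}\}$, a code $\mathcal{C}$ is $t$-tail-$X$-correcting if $\mathcal{B}_X^t(\pi_1)\cap\mathcal{B}_X^t(\pi_2)=\emptyset$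 for all distinct $\pi_1,\pi_2\in\mathcal{C}$. *)

theory Defs
  imports Main
begin

text \<open>Partial permutations over [q] = {0..<q}, represented as lists of naturals.\<close>

definition S_m :: "nat \<Rightarrow> nat \<Rightarrow> nat list set" where
  "S_m q m = {p. length p = m \<and> distinct p \<and> set p \<subseteq> {0..<q}}"

definition S_all :: "nat \<Rightarrow> nat list set" where
  "S_all q = (\<Union>m\<in>{1..q}. S_m q m)"

definition tail_del :: "nat list \<Rightarrow> nat \<Rightarrow> nat list" where
  "tail_del p j = drop (min j (length p - 1)) p"

definition ball_del :: "nat \<Rightarrow> nat list \<Rightarrow> nat list set" where
  "ball_del t p = {tail_del p j | j. j \<le> t}"

definition ball_ins :: "nat \<Rightarrow> nat \<Rightarrow> nat list \<Rightarrow> nat list set" where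
  "ball_ins q t p = {w @ p | w. length w \<le> t \<and> set w \<subseteq> {0..<q} \<and> w @ p \<in> S_all q}"

definition tail_del_correcting :: "nat \<Rightarrow> nat \<Rightarrow> nat list set \<Rightarrow> bool" where
  "tail_del_correcting q t C \<longleftrightarrow>
     (\<forall>p1\<in>C. \<forall>p2\<in>C. p1 \<noteq> p2 \<longrightarrow> ball_del t p1 \<inter> ball_del t p2 = {})"

definition tail_ins_correcting :: "nat \<Rightarrow> nat \<Rightarrow> nat list set \<Rightarrow> bool" where
  "tail_ins_correcting q t C \<longleftrightarrow>
     (\<forall>p1\<in>C. \<forall>p2\<in>C. p1 \<noteq> p2 \<longrightarrow> ball_ins q t p1 \<inter> ball_ins q t p2 = {})"

end

theory Submission
  imports Defs
begin

(* A common tail insertion w1 p1 = w2 p2 of two codewords shows that one codeword is the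
   other with at most t symbols prepended; deleting those symbols from the
   longer codeword yields the shorter one, which therefore lies in both tail-deletion balls.
   Conversely, distinct codewords of equal length never share a tail insertion, while
   [0,1] and [2,1] share the tail deletion [1]. *)

lemma Nil_notin_S_all: "[] \<notin> S_all q"
  by (auto simp: S_all_def S_m_def)

lemma self_in_ball_del: "p \<in> ball_del t p"
  unfolding ball_del_def tail_del_def by (auto intro!: exI[of _ 0])

lemma tail_del_append: "p \<noteq> [] \<Longrightarrow> tail_del (u @ p) (length u) = p"
  by (cases p) (simp_all add: tail_del_def)

lemma suffix_in_ball_del:
  assumes "p \<noteq> []" and "length u \<le> t"
  shows "p \<in> ball_del t (u @ p)"
  unfolding ball_del_def using assms tail_del_append[of p u] by force

lemma ball_ins_inter_imp_prepend:
  assumes "ball_ins q t p1 \<inter> ball_ins q t p2 \<noteq> {}"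
  obtains u where "length u \<le> t" and "p1 = u @ p2 \<or> p2 = u @ p1"
proof -
  obtain w1 w2 where eq: "w1 @ p1 = w2 @ p2" and "length w1 \<le> t" "length w2 \<le> t"
    using assms unfolding ball_ins_def by blast
  show ?thesis
  proof (cases "length w1 \<le> length w2")
    case True
    then have "p1 = drop (length w1) w2 @ p2"
      using eq by (metis append_eq_append_conv_if)
    then show ?thesis
      using that[of "drop (length w1) w2"] \<open>length w2 \<le> t\<close> by simp
  next
    case False
    then have "p2 = drop (length w2) w1 @ p1"
      using eq by (metis append_eq_append_conv_if nat_le_linear)
    then show ?thesis
      using that[of "drop (length w2) w1"] \<open>length w1 \<le> t\<close> by simp
  qed
qed

lemma ball_ins_inter_imp_ball_del_inter:
  assumes "p1 \<noteq> []" "p2 \<noteq> []" and "ball_ins q t p1 \<inter> ball_ins q t p2 \<noteq> {}"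
  shows "ball_del t p1 \<inter> ball_del t p2 \<noteq> {}"
proof -
  obtain u where "length u \<le> t" and "p1 = u @ p2 \<or> p2 = u @ p1"
    using ball_ins_inter_imp_prepend[OF assms(3)] .
  then show ?thesis
    using assms(1,2) suffix_in_ball_del self_in_ball_del by blast
qed

lemma tail_del_correcting_imp_tail_ins_correcting:
  assumes "C \<subseteq> S_all q" and "tail_del_correcting q t C"
  shows "tail_ins_correcting q t C"
  unfolding tail_ins_correcting_def
proof (intro ballI impI)
  fix p1 p2 assume "p1 \<in> C" "p2 \<in> C" "p1 \<noteq> p2"
  then have "ball_del t p1 \<inter> ball_del t p2 = {}" and "p1 \<noteq> []" "p2 \<noteq> []"
    using assms Nil_notin_S_all unfolding tail_del_correcting_def by blast+
  then show "ball_ins q t p1 \<inter> ball_ins q t p2 = {}"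
    using ball_ins_inter_imp_ball_del_inter by blast
qed

lemma ball_ins_disjoint_if_same_length:
  assumes "length p1 = length p2" and "p1 \<noteq> p2"
  shows "ball_ins q t p1 \<inter> ball_ins q t p2 = {}"
proof (rule ccontr)
  assume "ball_ins q t p1 \<inter> ball_ins q t p2 \<noteq> {}"
  then obtain u where "p1 = u @ p2 \<or> p2 = u @ p1"
    by (rule ball_ins_inter_imp_prepend)
  with assms show False by auto
qed

lemma tail_ins_correcting_if_same_length:
  assumes "\<forall>p\<in>C. length p = m"
  shows "tail_ins_correcting q t C"
  using assms ball_ins_disjoint_if_same_length
  unfolding tail_ins_correcting_def by simp

theorem mainTheorem4:
  shows "(\<forall>(q::nat) (t::nat) C. q \<ge> 1 \<longrightarrow> t \<ge> 1 \<longrightarrow> C \<subseteq> S_all q \<longrightarrow>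
            tail_del_correcting q t C \<longrightarrow> tail_ins_correcting q t C)
       \<and> (\<exists>(q::nat) (t::nat) C. q \<ge> 1 \<and> t \<ge> 1 \<and> C \<subseteq> S_all q \<and>
            tail_ins_correcting q t C \<and> \<not> tail_del_correcting q t C)"
proof (intro conjI allI impI)
  fix q t :: nat and C
  assume "C \<subseteq> S_all q" and "tail_del_correcting q t C"
  then show "tail_ins_correcting q t C"
    by (rule tail_del_correcting_imp_tail_ins_correcting)
next
  let ?C = "{[0, 1], [2, 1]} :: nat list set"
  have "?C \<subseteq> S_all 3"
    unfolding S_all_def S_m_def by (auto intro!: bexI[of _ 2])
  moreover have "tail_ins_correcting 3 1 ?C"
    by (rule tail_ins_correcting_if_same_length[where m = 2]) simp
  moreover have "[1] \<in> ball_del 1 [0, 1] \<inter> ball_del 1 [2, 1]"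
    using suffix_in_ball_del[of "[1]" "[0]"] suffix_in_ball_del[of "[1]" "[2]"] by simp
  then have "\<not> tail_del_correcting 3 1 ?C"
    unfolding tail_del_correcting_def by auto
  ultimately show "\<exists>(q::nat) (t::nat) C. q \<ge> 1 \<and> t \<ge> 1 \<and> C \<subseteq> S_all q \<and>
            tail_ins_correcting q t C \<and> \<not> tail_del_correcting q t C"
    by (metis one_le_numeral order_refl)
qed

end
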